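(* Let $\lambda>0$, $\mathbf{A}\in\mathbb{R}^{m\times n}$, let $f:\mathbb{R}^m\to\mathbb{R}\cup\{+\infty\}$ be proper, closed and convex, and let $h:\mathbb{R}\to\mathbb{R}\cup\{+\infty\}$ be proper, closed and convex with $0\in\mathrm{dom}(h)$, $h(0)=0$, and $0$ an accumulation point of $\mathrm{dom}(h)$. Let $\nu=(\mathcal{S}_0,\mathcal{S}_1,\mathcal{S}_\bullet)$ be a partition of $\{1,\dots,n\}$, let $\nu'=(\mathcal{S}_0',\mathcal{S}_1',\mathcal{S}_\bullet')$ be any partition of $\{1,\dots,n\}$ with $\mathcal{S}_0\subseteq\mathcal{S}_0'$ and $\mathcal{S}_1\subseteq\mathcal{S}_1'$, let $i\in\mathcal{S}_\bullet'$, let $\mathbf{u}\in\mathbb{R}^m$ and $\bar p\in\mathbb{R}$. Then $$D^{\nu_{0,i}}(\mathbf{u})>\bar p\implies D^{\nu'_{0,i}}(\mathbf{u})>\bar p,\qquad D^{\nu_{1,i}}(\mathbf{u})>\bar p\implies D^{\nu'_{1,i}}(\mathbf{u})>\bar p.$$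
   Context: $\|\mathbf{x}\|_0$ is the number of nonzero entries of $\mathbf{x}$; $\eta(\text{condition})=0$ if the condition holds and $+\infty$ otherwise; $\omega^*$ denotes the convex conjugate of $\omega$. An accumulation point $0$ of a set $\mathcal{C}\subseteq\mathbb{R}$: every neighborhood of $0$ contains a point of $\mathcal{C}$ other than $0$. For a partition $\nu=(\mathcal{S}_0,\mathcal{S}_1,\mathcal{S}_\bullet)$ of $\{1,\dots,n\}$: $\mathcal{X}^\nu=\{\mathbf{x}\in\mathbb{R}^n: x_j=0\ \forall j\in\mathcal{S}_0,\ x_j\neq0\ \forall j\in\mathcal{S}_1\}$; $g^\nu(\mathbf{x})=\lambda\|\mathbf{x}\|_0+\sum_{j=1}^n h(x_j)+\eta(\mathbf{x}\in\mathcal{X}^\nu)$; $D^\nu(\mathbf{u})=-f^*(-\mathbf{u})-(g^\nu)^*(\mathbf{A}^\top\mathbf{u})$. For $i\in\mathcal{S}_\bullet$, the two direct successors of $\nu$ are $\nu_{0,i}=(\mathcal{S}_0\cup\{i\},\mathcal{S}_1,\mathcal{S}_\bullet\setminus\{i\})$ and $\nu_{1,i}=(\mathcal{S}_0,\mathcal{S}_1\cup\{i\},\mathcal{S}_\bullet\setminus\{i\})$ (note $\mathcal{S}_\bullet'\subseteq\mathcal{S}_\bullet$, so $i\in\mathcal{S}_\bullet$); $\nu'_{0,i},\nu'_{1,i}$ are defined analogously from $\nu'$. *)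

theory Defs
  imports "HOL-Analysis.Analysis" "HOL-Library.Extended_Real"
begin

definition proper_fun :: "('a \<Rightarrow> ereal) \<Rightarrow> bool" where
  "proper_fun f \<longleftrightarrow> (\<forall>x. f x \<noteq> -\<infinity>) \<and> (\<exists>x. f x \<noteq> \<infinity>)"

definition epigraph :: "('a \<Rightarrow> ereal) \<Rightarrow> ('a \<times> real) set" where
  "epigraph f = {(x, t). f x \<le> ereal t}"

definition convex_fun :: "('a::real_vector \<Rightarrow> ereal) \<Rightarrow> bool" where
  "convex_fun f \<longleftrightarrow> convex (epigraph f)"

definition closed_fun :: "('a::topological_space \<Rightarrow> ereal) \<Rightarrow> bool" where
  "closed_fun f \<longleftrightarrow> closed (epigraph f)"

definition dom_fun :: "('a \<Rightarrow> ereal) \<Rightarrow> 'a set" where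
  "dom_fun f = {x. f x \<noteq> \<infinity>}"

definition conjugate :: "('a::real_inner \<Rightarrow> ereal) \<Rightarrow> 'a \<Rightarrow> ereal" where
  "conjugate f y = (SUP x. ereal (x \<bullet> y) - f x)"

definition is_partition :: "'n set \<Rightarrow> 'n set \<Rightarrow> 'n set \<Rightarrow> bool" where
  "is_partition S0 S1 Sb \<longleftrightarrow> S0 \<inter> S1 = {} \<and> S0 \<inter> Sb = {} \<and> S1 \<inter> Sb = {}
     \<and> S0 \<union> S1 \<union> Sb = UNIV"

definition Xnu :: "'n::finite set \<Rightarrow> 'n set \<Rightarrow> (real^'n) set" where
  "Xnu S0 S1 = {x. (\<forall>j\<in>S0. x$j = 0) \<and> (\<forall>j\<in>S1. x$j \<noteq> 0)}"

definition l0norm :: "real^'n::finite \<Rightarrow> nat" where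
  "l0norm x = card {j. x$j \<noteq> 0}"

definition gnu :: "real \<Rightarrow> (real \<Rightarrow> ereal) \<Rightarrow> 'n::finite set \<Rightarrow> 'n set \<Rightarrow> real^'n \<Rightarrow> ereal" where
  "gnu lam h S0 S1 x = ereal (lam * real (l0norm x)) + (\<Sum>j\<in>UNIV. h (x$j))
     + (if x \<in> Xnu S0 S1 then 0 else \<infinity>)"

definition Dnu :: "(real^'m \<Rightarrow> ereal) \<Rightarrow> real^'n^'m \<Rightarrow> real \<Rightarrow> (real \<Rightarrow> ereal)
      \<Rightarrow> 'n::finite set \<Rightarrow> 'n set \<Rightarrow> real^'m \<Rightarrow> ereal" where
  "Dnu f A lam h S0 S1 u = - conjugate f (- u) - conjugate (gnu lam h S0 S1) (transpose A *v u)"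

end

theory Submission
  imports Defs
begin

text \<open>Fixing more coordinates (to zero or to nonzero values) shrinks \<open>X^\<nu>\<close>, which can only
  raise \<open>g^\<nu>\<close>, hence lower its conjugate and raise the dual function \<open>D^\<nu>\<close>. Since the
  successors of \<open>\<nu>'\<close> refine the corresponding successors of \<open>\<nu>\<close>, any lower bound on the
  dual value carries over.\<close>

lemma Xnu_antimono: "S0 \<subseteq> S0' \<Longrightarrow> S1 \<subseteq> S1' \<Longrightarrow> Xnu S0' S1' \<subseteq> Xnu S0 S1"
  unfolding Xnu_def by auto

lemma gnu_mono:
  assumes "S0 \<subseteq> S0'" "S1 \<subseteq> S1'"
  shows "gnu lam h S0 S1 x \<le> gnu lam h S0' S1' x"
proof -
  have "(if x \<in> Xnu S0 S1 then 0 else \<infinity>) \<le> (if x \<in> Xnu S0' S1' then 0 else (\<infinity>::ereal))"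
    using Xnu_antimono[OF assms] by auto
  then show ?thesis unfolding gnu_def by (intro add_mono) auto
qed

lemma conjugate_antimono:
  assumes "\<And>x. g x \<le> g' x"
  shows "conjugate g' y \<le> conjugate g y"
  unfolding conjugate_def
  by (intro SUP_mono) (use assms ereal_minus_mono in blast)

lemma Dnu_mono:
  assumes "S0 \<subseteq> S0'" "S1 \<subseteq> S1'"
  shows "Dnu f A lam h S0 S1 u \<le> Dnu f A lam h S0' S1' u"
  unfolding Dnu_def
  by (intro ereal_minus_mono order_refl conjugate_antimono gnu_mono assms)

theorem proposition3p4:
  fixes lam :: real and A :: "real^'n::finite^'m::finite"
    and f :: "real^'m \<Rightarrow> ereal" and h :: "real \<Rightarrow> ereal"
    and S0 S1 Sb S0' S1' Sb' :: "'n set" and i :: 'n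
    and u :: "real^'m" and p :: real
  assumes "lam > 0"
    and "proper_fun f" "closed_fun f" "convex_fun f"
    and "proper_fun h" "closed_fun h" "convex_fun h"
    and "0 \<in> dom_fun h" "h 0 = 0" "0 islimpt dom_fun h"
    and "is_partition S0 S1 Sb"
    and "is_partition S0' S1' Sb'" "S0 \<subseteq> S0'" "S1 \<subseteq> S1'"
    and "i \<in> Sb'"
  shows "(Dnu f A lam h (S0 \<union> {i}) S1 u > ereal p \<longrightarrow> Dnu f A lam h (S0' \<union> {i}) S1' u > ereal p)
       \<and> (Dnu f A lam h S0 (S1 \<union> {i}) u > ereal p \<longrightarrow> Dnu f A lam h S0' (S1' \<union> {i}) u > ereal p)"
proof -
  have "Dnu f A lam h (S0 \<union> {i}) S1 u \<le> Dnu f A lam h (S0' \<union> {i}) S1' u"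
    using \<open>S0 \<subseteq> S0'\<close> \<open>S1 \<subseteq> S1'\<close> by (intro Dnu_mono) auto
  moreover have "Dnu f A lam h S0 (S1 \<union> {i}) u \<le> Dnu f A lam h S0' (S1' \<union> {i}) u"
    using \<open>S0 \<subseteq> S0'\<close> \<open>S1 \<subseteq> S1'\<close> by (intro Dnu_mono) auto
  ultimately show ?thesis
    by (meson less_le_trans)
qed

end
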